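(* For all integers $d\geq 1$ and $L\geq 1$, the VC dimension of the class $\mathrm{GNN}_{\mathrm{anp}}(d,L)$ over the set $\mathcal{G}$ of all finite graphs is unbounded, that is, $\mathrm{VCdim}_{\mathcal{G}}(\mathrm{GNN}_{\mathrm{anp}}(d,L))=\infty$; this holds even when restricted to architectures having only a single (real) parameter.
   Context: $\mathcal{G}$ is the set of finite, undirected, simple graphs $G=(V(G),E(G),\ell)$ with vertex labels $\ell:V(G)\to\mathbb{N}$, of arbitrary order; $N_G(v)$ denotes the neighbourhood of $v$. A graph neural network (GNN) of depth $L$ assigns to each vertex an initial vector $\mathbf{h}^{(0)}_v\in\mathbb{R}^{d^{(0)}}$ depending only on the label $\ell(v)$, and for $t=1,\dots,L$ computes $\mathbf{h}^{(t)}_v = \mathsf{upd}^{(t)}\big(\mathbf{h}^{(t-1)}_v, \mathsf{agg}^{(t)}(\{\!\{\mathbf{h}^{(t-1)}_u : u\in N_G(v)\}\!\})\big)\in\mathbb{R}^{d^{(t)}}$, and outputs $\xi(G)=\mathsf{readout}(\{\!\{\mathbf{h}^{(L)}_v : v\in V(G)\}\!\})\in\mathbb{R}$, where $\{\!\{\cdot\}\!\}$ denotes a multiset and $\mathsf{upd}^{(t)},\mathsf{agg}^{(t)},\mathsf{readout}$ are parameterized functions with real (arbitrary precision) parameters. The width is $\max_t d^{(t)}$. $\mathrm{GNN}(d,L)$ is the class of GNNs of depth $L$ and width at most $d$. $\mathrm{GNN}_{\mathrm{anp}}(d,L)\subseteq\mathrm{GNN}(d,L)$ is the subclass in which every aggregation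 function is the sum of the neighbours' embeddings and the update and readout functions are single-layer perceptrons (an affine map followed by an activation function) using analytic non-polynomial activation functions. VC dimension: $\mathrm{VCdim}_{\mathcal{X}}(\mathcal{C})$ is the maximal $m$ such that there exist graphs $G_1,\dots,G_m\in\mathcal{X}$ and a fixed threshold $t\in\mathbb{R}$ such that for every $\mathbf{x}\in\{0,1\}^m$ there is a GNN in $\mathcal{C}$ whose output $\xi_{\mathbf{x}}$ satisfies $\xi_{\mathbf{x}}(G_i)\geq t$ if and only if $x_i=1$, for all $i\in[m]$; it is $\infty$ if no such maximum exists. *)

theory Defs
  imports Complex_Main "HOL-Computational_Algebra.Polynomial" "HOL-Library.Extended_Nat"
begin

record lgraph =
  verts :: "nat set"
  adj   :: "nat \<Rightarrow> nat \<Rightarrow> bool"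
  lab   :: "nat \<Rightarrow> nat"

definition wf_graph :: "lgraph \<Rightarrow> bool" where
  "wf_graph G \<longleftrightarrow> finite (verts G)
     \<and> (\<forall>u v. adj G u v \<longrightarrow> u \<in> verts G \<and> v \<in> verts G)
     \<and> (\<forall>u v. adj G u v \<longrightarrow> adj G v u)
     \<and> (\<forall>v. \<not> adj G v v)"

definition all_graphs :: "lgraph set" where
  "all_graphs = {G. wf_graph G}"

definition nbrs :: "lgraph \<Rightarrow> nat \<Rightarrow> nat set" where
  "nbrs G v = {u \<in> verts G. adj G v u}"

text \<open>PW t i j, PU t i j, PB t i: weight on own embedding, weight on summed neighbour
  embeddings and bias of layer t; PRW i, PRB: readout weights and bias.\<close>
datatype param_idx = PW nat nat nat | PU nat nat nat | PB nat nat | PRW nat | PRB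

record gnn =
  dims  :: "nat \<Rightarrow> nat"
  init  :: "nat \<Rightarrow> nat \<Rightarrow> real"         \<comment> \<open>label \<Rightarrow> initial embedding (component i)\<close>
  act   :: "nat \<Rightarrow> real \<Rightarrow> real"        \<comment> \<open>activation of layer t (t = L+1: readout)\<close>
  param :: "param_idx \<Rightarrow> real"

fun emb :: "gnn \<Rightarrow> lgraph \<Rightarrow> nat \<Rightarrow> nat \<Rightarrow> nat \<Rightarrow> real" where
  "emb N G 0 v = (\<lambda>i. if i < dims N 0 then init N (lab G v) i else 0)"
| "emb N G (Suc t) v = (\<lambda>i. if i < dims N (Suc t) then
      act N (Suc t)
        ((\<Sum>j<dims N t. param N (PW (Suc t) i j) * emb N G t v j)
         + (\<Sum>j<dims N t. param N (PU (Suc t) i j) * (\<Sum>u\<in>nbrs G v. emb N G t u j))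
         + param N (PB (Suc t) i))
    else 0)"

definition gnn_out :: "nat \<Rightarrow> gnn \<Rightarrow> lgraph \<Rightarrow> real" where
  "gnn_out L N G = act N (Suc L)
     ((\<Sum>i<dims N L. param N (PRW i) * (\<Sum>v\<in>verts G. emb N G L v i)) + param N PRB)"

definition real_analytic :: "(real \<Rightarrow> real) \<Rightarrow> bool" where
  "real_analytic f \<longleftrightarrow> (\<forall>x. \<exists>r>0. \<exists>c::nat \<Rightarrow> real.
      \<forall>y. \<bar>y - x\<bar> < r \<longrightarrow> (\<lambda>n. c n * (y - x) ^ n) sums f y)"

definition is_polynomial_fun :: "(real \<Rightarrow> real) \<Rightarrow> bool" where
  "is_polynomial_fun f \<longleftrightarrow> (\<exists>p :: real poly. \<forall>x. f x = poly p x)"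

definition anp :: "nat \<Rightarrow> nat \<Rightarrow> gnn \<Rightarrow> bool" where
  "anp d L N \<longleftrightarrow> (\<forall>t\<le>L. dims N t \<le> d)
     \<and> (\<forall>t\<in>{1..Suc L}. real_analytic (act N t) \<and> \<not> is_polynomial_fun (act N t))"

definition GNN_anp :: "nat \<Rightarrow> nat \<Rightarrow> (lgraph \<Rightarrow> real) set" where
  "GNN_anp d L = {gnn_out L N | N. anp d L N}"

definition shatters_m :: "'a set \<Rightarrow> ('a \<Rightarrow> real) set \<Rightarrow> nat \<Rightarrow> bool" where
  "shatters_m X C m \<longleftrightarrow> (\<exists>Gs :: nat \<Rightarrow> 'a. \<exists>t::real. (\<forall>i<m. Gs i \<in> X) \<and>
      (\<forall>x :: nat \<Rightarrow> bool. \<exists>\<xi>\<in>C. \<forall>i<m. (\<xi> (Gs i) \<ge> t \<longleftrightarrow> x i)))"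

definition VCdim :: "'a set \<Rightarrow> ('a \<Rightarrow> real) set \<Rightarrow> enat" where
  "VCdim X C = (if finite {m. shatters_m X C m} then enat (Max {m. shatters_m X C m}) else \<infinity>)"

definition one_param_family :: "nat \<Rightarrow> gnn \<Rightarrow> param_idx \<Rightarrow> (lgraph \<Rightarrow> real) set" where
  "one_param_family L N p = {gnn_out L (N\<lparr>param := (param N)(p := w)\<rparr>) | w. True}"

end

theory Submission
  imports Defs
begin

text \<open>A single sine neuron already has infinite VC dimension: choosing the frequency \<open>w\<close>
  bit by bit (each halving step picks \<open>w/2\<close> or \<open>w/2 + \<pi>\<close>) realises every sign pattern of
  \<open>sin (w * 2^i)\<close>, \<open>i < m\<close>. A network with activation \<open>sin\<close>, constant embeddings and readout
  weight \<open>w\<close> computes \<open>sin (w * |V(G)|)\<close>, so it shatters the edgeless graphs on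
  \<open>1, 2, 4, \<dots>, 2^(m-1)\<close> vertices for every \<open>m\<close>. The construction works at every depth.\<close>

lemma real_analytic_sin: "real_analytic sin"
  unfolding real_analytic_def
proof (intro allI exI conjI impI)
  fix x y :: real
  have "(\<lambda>n. sin x * (cos_coeff n * (y - x) ^ n) + cos x * (sin_coeff n * (y - x) ^ n))
      sums (sin x * cos (y - x) + cos x * sin (y - x))"
    using cos_converges[of "y - x"] sin_converges[of "y - x"] by (intro sums_add sums_mult) simp_all
  moreover have "sin x * cos (y - x) + cos x * sin (y - x) = sin y"
    using sin_add[of x "y - x"] by simp
  ultimately show "(\<lambda>n. (sin x * cos_coeff n + cos x * sin_coeff n) * (y - x) ^ n) sums sin y"
    by (simp add: algebra_simps)
qed (rule zero_less_one)

lemma not_polynomial_fun_sin: "\<not> is_polynomial_fun sin"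
proof
  assume "is_polynomial_fun sin"
  then obtain p :: "real poly" where p: "\<And>x. sin x = poly p x"
    unfolding is_polynomial_fun_def by blast
  have "p \<noteq> 0"
    using p[of "pi / 2"] by auto
  then have "finite {x. poly p x = 0}"
    by (rule poly_roots_finite)
  moreover have "range (\<lambda>n::nat. real n * pi) \<subseteq> {x. poly p x = 0}"
    by (auto simp flip: p)
  moreover have "infinite (range (\<lambda>n::nat. real n * pi))"
    by (rule range_inj_infinite) (auto simp: inj_def)
  ultimately show False
    using finite_subset by blast
qed

lemma sin_add_2npi: "sin (x + 2 * real n * pi) = sin x"
  by (simp add: sin_add)

lemma sin_doubling_realises_signs:
  fixes x :: "nat \<Rightarrow> bool"
  shows "\<exists>w. 0 < w \<and> w < 2 * pi \<and> (\<forall>i<m. 0 \<le> sin (w * 2 ^ i) \<longleftrightarrow> x i)"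
proof (induction m arbitrary: x)
  case 0
  show ?case
    by (intro exI[of _ pi]) simp
next
  case (Suc m)
  obtain w where w: "0 < w" "w < 2 * pi"
    and signs: "\<forall>i<m. 0 \<le> sin (w * 2 ^ i) \<longleftrightarrow> x (Suc i)"
    using Suc.IH[of "\<lambda>i. x (Suc i)"] by blast
  define w' where "w' = w / 2 + (if x 0 then 0 else pi)"
  have range_w': "0 < w'" "w' < 2 * pi"
    using w pi_gt_zero by (auto simp: w'_def)
  have "0 < sin (w / 2)"
    using w by (intro sin_gt_zero) auto
  then have sign_0: "0 \<le> sin w' \<longleftrightarrow> x 0"
    by (simp add: w'_def)
  have doubled: "sin (w' * 2 ^ Suc i) = sin (w * 2 ^ i)" for i
  proof -
    have "w' * 2 ^ Suc i = w * 2 ^ i + 2 * real (if x 0 then 0 else 2 ^ i) * pi"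
      by (simp add: w'_def algebra_simps)
    then show ?thesis
      by (simp only: sin_add_2npi)
  qed
  show ?case
  proof (intro exI conjI allI impI)
    fix i assume "i < Suc m"
    then show "0 \<le> sin (w' * 2 ^ i) \<longleftrightarrow> x i"
      using sign_0 signs doubled by (cases i) auto
  qed (fact range_w')+
qed

lemma shatters_m_mono:
  assumes "C \<subseteq> D" and "shatters_m X C m"
  shows "shatters_m X D m"
proof -
  obtain Gs t where "\<forall>i<m. Gs i \<in> X"
    and "\<forall>x. \<exists>\<xi>\<in>C. \<forall>i<m. t \<le> \<xi> (Gs i) \<longleftrightarrow> x i"
    using assms(2) unfolding shatters_m_def by (elim exE conjE)
  with assms(1) show ?thesis
    unfolding shatters_m_def by (intro exI[of _ Gs] exI[of _ t] conjI) blast+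
qed

lemma VCdim_eq_infinity:
  assumes "\<And>m. shatters_m X C m"
  shows "VCdim X C = \<infinity>"
proof -
  have "{m. shatters_m X C m} = UNIV"
    using assms by blast
  then show ?thesis
    by (simp add: VCdim_def)
qed

definition edgeless_graph :: "nat \<Rightarrow> lgraph" where
  "edgeless_graph n = \<lparr>verts = {..<n}, adj = (\<lambda>_ _. False), lab = (\<lambda>_. 0)\<rparr>"

lemma edgeless_graph_in_all_graphs: "edgeless_graph n \<in> all_graphs"
  by (simp add: all_graphs_def wf_graph_def edgeless_graph_def)

lemma card_verts_edgeless_graph: "card (verts (edgeless_graph n)) = n"
  by (simp add: edgeless_graph_def)

text \<open>Every bias is \<open>\<pi>/2\<close> and every other weight \<open>0\<close>, so each layer outputs
  \<open>sin (\<pi>/2) = 1\<close>; only the readout weight \<open>PRW 0\<close> is left free.\<close>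
definition sin_gnn :: gnn where
  "sin_gnn = \<lparr>dims = (\<lambda>_. 1), init = (\<lambda>_ _. 1), act = (\<lambda>_. sin),
              param = (\<lambda>p. case p of PB _ _ \<Rightarrow> pi / 2 | _ \<Rightarrow> 0)\<rparr>"

abbreviation sin_gnn_readout :: "real \<Rightarrow> gnn" where
  "sin_gnn_readout w \<equiv> sin_gnn\<lparr>param := (param sin_gnn)(PRW 0 := w)\<rparr>"

lemma emb_sin_gnn_readout: "emb (sin_gnn_readout w) G t v = (\<lambda>i. if i = 0 then 1 else 0)"
  by (induction t arbitrary: v) (auto simp: sin_gnn_def)

lemma gnn_out_sin_gnn_readout: "gnn_out L (sin_gnn_readout w) G = sin (w * real (card (verts G)))"
  unfolding gnn_out_def emb_sin_gnn_readout by (simp add: sin_gnn_def)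

lemma anp_sin_gnn_readout:
  assumes "d \<ge> 1"
  shows "anp d L (sin_gnn_readout w)"
  using assms real_analytic_sin not_polynomial_fun_sin by (simp add: anp_def sin_gnn_def)

lemma shatters_m_sin_gnn: "shatters_m all_graphs (one_param_family L sin_gnn (PRW 0)) m"
  unfolding shatters_m_def
proof (intro exI[of _ "\<lambda>i. edgeless_graph (2 ^ i)"] exI[of _ 0] conjI allI impI)
  show "edgeless_graph (2 ^ i) \<in> all_graphs" for i
    by (rule edgeless_graph_in_all_graphs)
next
  fix x :: "nat \<Rightarrow> bool"
  obtain w :: real where "\<forall>i<m. 0 \<le> sin (w * 2 ^ i) \<longleftrightarrow> x i"
    using sin_doubling_realises_signs by blast
  then have "\<forall>i<m. 0 \<le> gnn_out L (sin_gnn_readout w) (edgeless_graph (2 ^ i)) \<longleftrightarrow> x i"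
    by (simp add: gnn_out_sin_gnn_readout card_verts_edgeless_graph)
  moreover have "gnn_out L (sin_gnn_readout w) \<in> one_param_family L sin_gnn (PRW 0)"
    by (auto simp: one_param_family_def)
  ultimately show "\<exists>\<xi>\<in>one_param_family L sin_gnn (PRW 0).
      \<forall>i<m. 0 \<le> \<xi> (edgeless_graph (2 ^ i)) \<longleftrightarrow> x i"
    by (rule bexI)
qed

theorem theorem5:
  fixes d L :: nat
  assumes "d \<ge> 1" and "L \<ge> 1"
  shows "VCdim all_graphs (GNN_anp d L) = \<infinity>
    \<and> (\<exists>N p. (\<forall>w. anp d L (N\<lparr>param := (param N)(p := w)\<rparr>))
              \<and> VCdim all_graphs (one_param_family L N p) = \<infinity>)"
proof -
  have anp: "\<forall>w. anp d L (sin_gnn_readout w)"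
    using anp_sin_gnn_readout[OF assms(1)] by blast
  then have "one_param_family L sin_gnn (PRW 0) \<subseteq> GNN_anp d L"
    unfolding one_param_family_def GNN_anp_def by blast
  then have "VCdim all_graphs (GNN_anp d L) = \<infinity>"
    by (intro VCdim_eq_infinity shatters_m_mono[OF _ shatters_m_sin_gnn])
  moreover have "VCdim all_graphs (one_param_family L sin_gnn (PRW 0)) = \<infinity>"
    by (intro VCdim_eq_infinity shatters_m_sin_gnn)
  ultimately show ?thesis
    using anp by blast
qed

end
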